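(* Let $C$ be an $[n,k,d]$ and $C'$ an $[n',k',d']$ linear code over $\mathbb{F}_q$, let $x \in C \times C'$, $e \in \mathbb{F}_q^{n \times n'}$ and $y = x + e$. Perform the column decoding of $y$ described in the context, obtaining $\hat{x}$, the reliability weights $\alpha_1,\dots,\alpha_{n'}$ and the set $I_E$. Suppose that $$2\sum_{j=1}^{n'} \min\{ w(e_j), d\} < d\, d'$$ (in particular this holds whenever $2w(e) < d d'$). Then $$\sum_{j \in [n'] \setminus I_E} \alpha_j \;-\; \sum_{j \in I_E} \alpha_j \;>\; n' - d',$$ and consequently, for every row index $i \in [n]$, $$\sum_{j=1}^{n'} \alpha_j \,(-1)^{w(\hat{x}_{ij} - x_{ij})} \;>\; n' - d',$$ where $w(\hat{x}_{ij} - x_{ij})$ is $0$ if $\hat{x}_{ij} = x_{ij}$ and $1$ otherwise.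
   Context: The product code $C \times C'$ consists of the matrices $G^T X G'$ for $X \in \mathbb{F}_q^{k\times k'}$, where $G, G'$ are generator matrices of $C, C'$; equivalently its elements are the $n \times n'$ matrices all of whose columns lie in $C$ and all of whose rows lie in $C'$. For a matrix $b$, $b_j$ denotes its $j$-th column and $b^i$ its $i$-th row; $w(\cdot)$ is Hamming weight. Let $t = \lfloor (d-1)/2 \rfloor$. Column decoding: each column $y_j$ ($j \in [n']$) is decoded by a bounded-distance decoder for $C$, which returns the unique codeword of $C$ at Hamming distance at most $t$ from $y_j$ if one exists, and otherwise declares failure. If decoding succeeds with output $\hat{x}_j$, set $\hat{e}_j = y_j - \hat{x}_j$ and $\alpha_j = (d - 2 w(\hat{e}_j))/d$; if it fails, set $\hat{x}_j = y_j$ and $\alpha_j = 0$. Let $\hat{x}$ be the matrix with columns $\hat{x}_j$. Let $I_E \subseteq [n']$ be the set of indices $j$ for which column decoding failed or $\hat{x}_j \neq x_j$. *)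

theory Defs
  imports Complex_Main "HOL-Library.Function_Algebras"
begin

text \<open>Vectors of length n over a field are functions nat => 'a vanishing outside {0..<n};
  n x n' matrices are functions nat => nat => 'a vanishing outside {0..<n} x {0..<n'}.\<close>

definition vecs :: "nat \<Rightarrow> (nat \<Rightarrow> 'a::zero) set" where
  "vecs n = {v. \<forall>i. n \<le> i \<longrightarrow> v i = 0}"

definition mats :: "nat \<Rightarrow> nat \<Rightarrow> (nat \<Rightarrow> nat \<Rightarrow> 'a::zero) set" where
  "mats n n' = {b. \<forall>i j. (n \<le> i \<or> n' \<le> j) \<longrightarrow> b i j = 0}"

definition hw :: "nat \<Rightarrow> (nat \<Rightarrow> 'a::zero) \<Rightarrow> nat" where
  "hw n v = card {i. i < n \<and> v i \<noteq> 0}"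

definition vscale :: "'a::field \<Rightarrow> (nat \<Rightarrow> 'a) \<Rightarrow> (nat \<Rightarrow> 'a)" where
  "vscale c v = (\<lambda>i. c * v i)"

definition lin_code :: "nat \<Rightarrow> nat \<Rightarrow> nat \<Rightarrow> (nat \<Rightarrow> 'a::field) set \<Rightarrow> bool" where
  "lin_code n k d C \<longleftrightarrow>
     C \<subseteq> vecs n \<and> 0 \<in> C \<and>
     (\<forall>u\<in>C. \<forall>v\<in>C. u + v \<in> C) \<and>
     (\<forall>c. \<forall>v\<in>C. vscale c v \<in> C) \<and>
     vector_space.dim vscale C = k \<and>
     (\<exists>v\<in>C. v \<noteq> 0 \<and> hw n v = d) \<and>
     (\<forall>v\<in>C. v \<noteq> 0 \<longrightarrow> d \<le> hw n v)"

definition col :: "(nat \<Rightarrow> nat \<Rightarrow> 'a) \<Rightarrow> nat \<Rightarrow> (nat \<Rightarrow> 'a)" where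
  "col b j = (\<lambda>i. b i j)"

definition row :: "(nat \<Rightarrow> nat \<Rightarrow> 'a) \<Rightarrow> nat \<Rightarrow> (nat \<Rightarrow> 'a)" where
  "row b i = (\<lambda>j. b i j)"

definition product_code :: "nat \<Rightarrow> nat \<Rightarrow> (nat \<Rightarrow> 'a::zero) set \<Rightarrow> (nat \<Rightarrow> 'a) set
    \<Rightarrow> (nat \<Rightarrow> nat \<Rightarrow> 'a) set" where
  "product_code n n' C C' =
     {b \<in> mats n n'. (\<forall>j<n'. col b j \<in> C) \<and> (\<forall>i<n. row b i \<in> C')}"

definition bd_decode :: "nat \<Rightarrow> nat \<Rightarrow> (nat \<Rightarrow> 'a::ab_group_add) set \<Rightarrow> (nat \<Rightarrow> 'a)
    \<Rightarrow> (nat \<Rightarrow> 'a) option" where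
  "bd_decode n d C y =
     (if \<exists>!c. c \<in> C \<and> hw n (y - c) \<le> (d - 1) div 2
      then Some (THE c. c \<in> C \<and> hw n (y - c) \<le> (d - 1) div 2)
      else None)"

definition xhat :: "nat \<Rightarrow> nat \<Rightarrow> (nat \<Rightarrow> 'a::ab_group_add) set \<Rightarrow> (nat \<Rightarrow> nat \<Rightarrow> 'a)
    \<Rightarrow> (nat \<Rightarrow> nat \<Rightarrow> 'a)" where
  "xhat n d C y = (\<lambda>i j. case bd_decode n d C (col y j) of
       Some c \<Rightarrow> c i | None \<Rightarrow> y i j)"

definition alpha :: "nat \<Rightarrow> nat \<Rightarrow> (nat \<Rightarrow> 'a::ab_group_add) set \<Rightarrow> (nat \<Rightarrow> nat \<Rightarrow> 'a)
    \<Rightarrow> nat \<Rightarrow> real" where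
  "alpha n d C y j = (case bd_decode n d C (col y j) of
       Some c \<Rightarrow> (real d - 2 * real (hw n (col y j - c))) / real d
     | None \<Rightarrow> 0)"

definition IE :: "nat \<Rightarrow> nat \<Rightarrow> nat \<Rightarrow> (nat \<Rightarrow> 'a::ab_group_add) set \<Rightarrow> (nat \<Rightarrow> nat \<Rightarrow> 'a)
    \<Rightarrow> (nat \<Rightarrow> nat \<Rightarrow> 'a) \<Rightarrow> nat set" where
  "IE n n' d C x y = {j. j < n' \<and>
     (bd_decode n d C (col y j) = None \<or> col (xhat n d C y) j \<noteq> col x j)}"

end

theory Submission
  imports Defs
begin

text \<open>Call column j good if it is decoded to the transmitted codeword, bad otherwise (j \<in> I_E).
  Each column contributes its signed reliability, +alpha_j if good and -alpha_j if bad, and this is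
  at least 1 - 2 min(w(e_j), d)/d: a good column has alpha_j = 1 - 2 w(e_j)/d, a failed column
  has alpha_j = 0 but w(e_j) > t, and a miscorrected column is at distance \<le> t from a wrong
  codeword, so w(e_j) + w(e-hat_j) \<ge> d. Summing over the columns and using the hypothesis gives
  a total > n' - d'. Along a row, the sign (-1)^w(xhat_ij - x_ij) can only be negative on bad
  columns, so each row sum dominates the signed sum.\<close>

lemma hw_diff_le: "hw n (u - v) \<le> hw n u + hw n (v :: nat \<Rightarrow> 'a::ab_group_add)"
proof -
  have "{i. i < n \<and> (u - v) i \<noteq> 0} \<subseteq> {i. i < n \<and> u i \<noteq> 0} \<union> {i. i < n \<and> v i \<noteq> 0}"
    by auto
  then have "card {i. i < n \<and> (u - v) i \<noteq> 0}
      \<le> card ({i. i < n \<and> u i \<noteq> 0} \<union> {i. i < n \<and> v i \<noteq> 0})"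
    by (intro card_mono) auto
  also have "\<dots> \<le> card {i. i < n \<and> u i \<noteq> 0} + card {i. i < n \<and> v i \<noteq> 0}"
    by (rule card_Un_le)
  finally show ?thesis unfolding hw_def .
qed

lemma lin_code_diff_mem:
  assumes "lin_code n k d C" "a \<in> C" "b \<in> C"
  shows "a - b \<in> (C :: (nat \<Rightarrow> 'a::field) set)"
proof -
  have "a + vscale (-1) b \<in> C" using assms unfolding lin_code_def by blast
  moreover have "a + vscale (-1) b = a - b" by (simp add: vscale_def fun_eq_iff)
  ultimately show ?thesis by simp
qed

lemma lin_code_min_dist:
  assumes "lin_code n k d C" "a \<in> C" "b \<in> C" "a \<noteq> b"
  shows "d \<le> hw n (a - b :: nat \<Rightarrow> 'a::field)"
  using lin_code_diff_mem[OF assms(1-3)] assms(1,4) unfolding lin_code_def by simp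

lemma lin_code_min_dist_pos:
  assumes "lin_code n k d (C :: (nat \<Rightarrow> 'a::field) set)"
  shows "0 < d"
proof -
  obtain v where v: "v \<in> C" "v \<noteq> 0" "hw n v = d" and "v \<in> vecs n"
    using assms unfolding lin_code_def by blast
  obtain i where "v i \<noteq> 0" using v(2) by (auto simp: fun_eq_iff)
  moreover from this have "i < n"
    using \<open>v \<in> vecs n\<close> unfolding vecs_def by (auto simp: not_le[symmetric])
  ultimately have "{i. i < n \<and> v i \<noteq> 0} \<noteq> {}" by blast
  then have "0 < card {i. i < n \<and> v i \<noteq> 0}" by (simp add: card_gt_0_iff)
  then show ?thesis using v(3) by (simp add: hw_def)
qed

lemma bd_decode_SomeD:
  assumes "bd_decode n d C y = Some c"
  shows "c \<in> C" "hw n (y - c) \<le> (d - 1) div 2"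
proof -
  have ex: "\<exists>!c. c \<in> C \<and> hw n (y - c) \<le> (d - 1) div 2"
    using assms unfolding bd_decode_def by (auto split: if_splits)
  then have "c = (THE c. c \<in> C \<and> hw n (y - c) \<le> (d - 1) div 2)"
    using assms unfolding bd_decode_def by auto
  then show "c \<in> C" "hw n (y - c) \<le> (d - 1) div 2" using theI'[OF ex] by simp_all
qed

lemma bd_decode_eq_Some:
  assumes "lin_code n k d C" "c \<in> C" "hw n (y - c) \<le> (d - 1) div 2"
  shows "bd_decode n d C y = Some (c :: nat \<Rightarrow> 'a::field)"
proof -
  have "c' = c" if "c' \<in> C" "hw n (y - c') \<le> (d - 1) div 2" for c'
  proof (rule ccontr)
    assume "c' \<noteq> c"
    then have "d \<le> hw n (c' - c)" using lin_code_min_dist[OF assms(1) that(1) assms(2)] by simp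
    also have "\<dots> \<le> hw n (y - c) + hw n (y - c')"
      using hw_diff_le[of n "y - c" "y - c'"] by simp
    finally show False
      using assms(3) that(2) lin_code_min_dist_pos[OF assms(1)] by linarith
  qed
  then have "\<exists>!c'. c' \<in> C \<and> hw n (y - c') \<le> (d - 1) div 2"
    and "(THE c'. c' \<in> C \<and> hw n (y - c') \<le> (d - 1) div 2) = c"
    using assms(2,3) by (blast, blast)
  then show ?thesis unfolding bd_decode_def by simp
qed

lemma bd_decode_None_weight:
  assumes "lin_code n k d C" "c \<in> C" "bd_decode n d C (c + v) = None"
  shows "d \<le> 2 * hw n (v :: nat \<Rightarrow> 'a::field)"
proof -
  have "\<not> hw n v \<le> (d - 1) div 2"
    using bd_decode_eq_Some[OF assms(1,2), of "c + v"] assms(3) by auto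
  then show ?thesis by linarith
qed

lemma bd_decode_wrong_weight:
  assumes "lin_code n k d C" "c \<in> C" "bd_decode n d C (c + v) = Some c'" "c' \<noteq> c"
  shows "d \<le> hw n v + hw n (c + v - c' :: nat \<Rightarrow> 'a::field)"
proof -
  have "d \<le> hw n (c' - c)"
    using lin_code_min_dist[OF assms(1) bd_decode_SomeD(1)[OF assms(3)] assms(2,4)] .
  also have "c' - c = v - (c + v - c')" by simp
  also have "hw n \<dots> \<le> hw n v + hw n (c + v - c')" by (rule hw_diff_le)
  finally show ?thesis .
qed

lemma alpha_nonneg: "0 \<le> alpha n d C y j"
proof (cases "bd_decode n d C (col y j)")
  case (Some c)
  then have "2 * hw n (col y j - c) \<le> d" using bd_decode_SomeD(2) by fastforce
  then show ?thesis using Some by (simp add: alpha_def)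
qed (simp add: alpha_def)

lemma col_add: "col (x + e) j = col x j + col e j"
  by (simp add: col_def fun_eq_iff)

lemma xhat_eq_if_notin_IE:
  assumes "j < n'" "j \<notin> IE n n' d C x y"
  shows "xhat n d C y i j = x i j"
proof -
  have "col (xhat n d C y) j = col x j" using assms unfolding IE_def by auto
  then show ?thesis by (simp add: col_def fun_eq_iff)
qed

lemma one_minus_divide_le:
  fixes d m r :: real
  assumes "0 < d" "d - 2 * m \<le> r"
  shows "1 - 2 * m / d \<le> r / d"
proof -
  have "1 - 2 * m / d = (d - 2 * m) / d" using assms(1) by (simp add: diff_divide_distrib)
  also have "\<dots> \<le> r / d" using assms by (simp add: divide_right_mono)
  finally show ?thesis .
qed

lemma alpha_good_column:
  assumes "lin_code n k d C" "col x j \<in> C" "j < n'" "j \<notin> IE n n' d C x (x + e)"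
  shows "1 - 2 * real (min (hw n (col e j)) d) / real d \<le> alpha n d C (x + e) j"
proof -
  obtain c where dec: "bd_decode n d C (col (x + e) j) = Some c"
    using assms(3,4) unfolding IE_def by auto
  then have "col (xhat n d C (x + e)) j = c" by (simp add: xhat_def col_def)
  then have "c = col x j" using assms(3,4) dec unfolding IE_def by auto
  then have w: "col (x + e) j - c = col e j" by (simp add: col_add)
  then have "2 * hw n (col e j) \<le> d" using bd_decode_SomeD(2)[OF dec] by simp
  then have "min (hw n (col e j)) d = hw n (col e j)" by simp
  moreover have "alpha n d C (x + e) j = (real d - 2 * real (hw n (col e j))) / real d"
    using dec w by (simp add: alpha_def)
  ultimately show ?thesis
    using one_minus_divide_le lin_code_min_dist_pos[OF assms(1)] by simp
qed

lemma alpha_bad_column: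
  assumes "lin_code n k d C" "col x j \<in> C" "j \<in> IE n n' d C x (x + e)"
  shows "1 - 2 * real (min (hw n (col e j)) d) / real d \<le> - alpha n d C (x + e) j"
proof -
  define m where "m = min (hw n (col e j)) d"
  have d: "0 < real d" using lin_code_min_dist_pos[OF assms(1)] by simp
  show ?thesis
  proof (cases "bd_decode n d C (col (x + e) j)")
    case None
    then have "d \<le> 2 * hw n (col e j)"
      using bd_decode_None_weight[OF assms(1,2)] by (simp add: col_add)
    then have "real d - 2 * real m \<le> 0" unfolding m_def by linarith
    then have "1 - 2 * real m / real d \<le> 0 / real d" using one_minus_divide_le[OF d] by blast
    then show ?thesis using None by (simp add: alpha_def m_def)
  next
    case (Some c)
    define w where "w = hw n (col (x + e) j - c)"
    have "col (xhat n d C (x + e)) j = c" using Some by (simp add: xhat_def col_def)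
    then have "c \<noteq> col x j" using assms(3) Some unfolding IE_def by auto
    then have "d \<le> hw n (col e j) + w"
      using bd_decode_wrong_weight[OF assms(1,2), of "col e j" c] Some
      by (simp add: col_add w_def)
    then have "real d - 2 * real m \<le> 2 * real w - real d" unfolding m_def by linarith
    then have "1 - 2 * real m / real d \<le> (2 * real w - real d) / real d"
      using one_minus_divide_le[OF d] by blast
    moreover have "- alpha n d C (x + e) j = (2 * real w - real d) / real d"
      using Some by (simp add: alpha_def w_def minus_divide_left)
    ultimately show ?thesis unfolding m_def by simp
  qed
qed

theorem mainTheorem2:
  fixes C C' :: "(nat \<Rightarrow> 'a::{field,finite}) set"
    and n k d n' k' d' :: nat
    and x e :: "nat \<Rightarrow> nat \<Rightarrow> 'a"
  assumes "lin_code n k d C"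
    and "lin_code n' k' d' C'"
    and "x \<in> product_code n n' C C'"
    and "e \<in> mats n n'"
    and "2 * (\<Sum>j<n'. min (hw n (col e j)) d) < d * d'"
  shows "(\<Sum>j\<in>{..<n'} - IE n n' d C x (x + e). alpha n d C (x + e) j)
           - (\<Sum>j\<in>IE n n' d C x (x + e). alpha n d C (x + e) j) > real n' - real d'
         \<and> (\<forall>i<n. (\<Sum>j<n'. alpha n d C (x + e) j *
                 (-1) ^ (if xhat n d C (x + e) i j = x i j then 0 else 1)) > real n' - real d')"
proof -
  let ?I = "IE n n' d C x (x + e)" and ?a = "alpha n d C (x + e)"
  let ?s = "\<lambda>j. if j \<in> ?I then - ?a j else ?a j"
  let ?m = "\<lambda>j. real (min (hw n (col e j)) d)"
  have d: "0 < real d" using lin_code_min_dist_pos[OF assms(1)] by simp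
  have cols: "col x j \<in> C" if "j < n'" for j
    using assms(3) that unfolding product_code_def by blast
  have "real (2 * (\<Sum>j<n'. min (hw n (col e j)) d)) < real (d * d')"
    using assms(5) by (simp only: of_nat_less_iff)
  then have "2 * (\<Sum>j<n'. ?m j) < real d * real d'"
    by (simp only: of_nat_mult of_nat_sum of_nat_numeral)
  then have "2 * (\<Sum>j<n'. ?m j) / real d < real d'"
    using d by (simp add: divide_less_eq mult.commute)
  then have "real n' - real d' < (\<Sum>j<n'. 1 - 2 * ?m j / real d)"
    by (simp add: sum_subtractf sum_divide_distrib[symmetric] sum_distrib_left)
  also have "\<dots> \<le> (\<Sum>j<n'. ?s j)"
  proof (rule sum_mono)
    fix j assume "j \<in> {..<n'}"
    then show "1 - 2 * ?m j / real d \<le> ?s j"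
      using alpha_good_column[OF assms(1) cols] alpha_bad_column[OF assms(1) cols] by simp
  qed
  finally have signed: "real n' - real d' < (\<Sum>j<n'. ?s j)" .
  have "?I \<subseteq> {..<n'}" unfolding IE_def by auto
  then have "(\<Sum>j<n'. ?s j) = (\<Sum>j\<in>{..<n'} - ?I. ?a j) - (\<Sum>j\<in>?I. ?a j)"
    using sum.subset_diff[of ?I "{..<n'}" ?s] by (simp add: sum_negf)
  moreover have "(\<Sum>j<n'. ?s j)
      \<le> (\<Sum>j<n'. ?a j * (-1) ^ (if xhat n d C (x + e) i j = x i j then 0 else 1))" for i
  proof (rule sum_mono)
    fix j assume "j \<in> {..<n'}"
    then show "?s j \<le> ?a j * (-1) ^ (if xhat n d C (x + e) i j = x i j then 0 else 1)"
      using xhat_eq_if_notin_IE[of j n' n d C x "x + e" i] alpha_nonneg[of n d C "x + e" j]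
      by auto
  qed
  ultimately show ?thesis using signed by (auto intro: order_less_le_trans)
qed

end
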